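(* Let $n\ge2$ and let $a_1,\dots,a_{n-1}\in\mathbb C$ be fixed. For $a\in\mathbb C$ set $g_a(z)=z^n+a^n$ and $f_a(z)=z^n+a_{n-1}z^{n-1}+\cdots+a_1z+a^n$. Then $$\lim_{|a|\to+\infty}d_F\Bigl(Z\bigl(S(a_{n-1}/n)g_a\bigr),Z(f_a)\Bigr)=0.$$
   Context: For $\beta\in\mathbb C$, $(S(\beta)f)(z)=f(\beta+z)$. $Z(f)$ denotes the roots of $f$ counted with multiplicity. For multisets $A=\{u_1,\dots,u_m\}$, $B=\{v_1,\dots,v_m\}$ in $\mathbb C$, $d_F(A,B)=\min_{\sigma}\max_k|u_k-v_{\sigma(k)}|$ over permutations $\sigma$ of $\{1,\dots,m\}$. *)

theory Defs
  imports "HOL-Analysis.Analysis" "HOL-Computational_Algebra.Computational_Algebra"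
begin

definition shift_poly :: "complex \<Rightarrow> complex poly \<Rightarrow> complex poly" where
  "shift_poly \<beta> f = f \<circ>\<^sub>p [:\<beta>, 1:]"

definition enum_ms :: "complex multiset \<Rightarrow> complex list" where
  "enum_ms A = (SOME xs. mset xs = A)"

text \<open>Matching distance between multisets A = {u_1..u_m}, B = {v_1..v_m}:
  min over permutations sigma of {0..<m} of max_k |u_k - v_(sigma k)|.
  (Used only for nonempty multisets of equal size.)\<close>
definition dF :: "complex multiset \<Rightarrow> complex multiset \<Rightarrow> real" where
  "dF A B = (let u = enum_ms A; v = enum_ms B; m = size A in
     Min ((\<lambda>\<sigma>. Max ((\<lambda>k. cmod (u ! k - v ! (\<sigma> k))) ` {..<m}))
          ` {\<sigma>. \<sigma> permutes {..<m}}))"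

end

theory Submission
  imports Defs
begin

(* Write beta = c(n-1)/n, H_a(z) = (z + beta)^n + a^n (the shifted binomial) and
   F_a(z) = z^n + c(n-1) z^(n-1) + ... + c 1 z + a^n.  By the binomial theorem the coefficients
   of degree n and n-1 of F_a and H_a agree, so Q = F_a - H_a has degree at most n-2 and
   coefficients independent of a:  |Q z| <= D (1 + |z|)^(n-2).  The roots of H_a are
   -beta + a w with w^n = -1; they are simple, have modulus at most |a| + |beta| and are
   pairwise at distance at least delta |a|, where delta > 0 separates the n-th roots of -1.

   The heart of the argument is a general perturbation lemma: if two monic polynomials of
   degree n differ by at most D (1 + |z|)^(n-2), one of them has simple roots of size about rho
   that are delta rho apart, and rho is large compared with D and 1/eps, then every root of
   either polynomial lies within eps of a root of the other.  Because the roots of H_a are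
   2 eps apart, this yields a bijective matching of the roots within eps, hence
   d_F <= eps. *)

section \<open>The matching distance\<close>

lemma mset_enum_ms: "mset (enum_ms A) = A"
  unfolding enum_ms_def by (rule someI_ex) (rule ex_mset)

lemma dF_le_matching:
  assumes onto: "image_mset \<phi> B = A" and close: "\<forall>x\<in>#B. cmod (\<phi> x - x) \<le> e"
    and nonempty: "size A > 0"
  shows "dF A B \<le> e"
proof -
  define u where "u = enum_ms A"
  define v where "v = enum_ms B"
  define m where "m = size A"
  have mu: "mset u = A" and mv: "mset v = B" by (simp_all add: u_def v_def mset_enum_ms)
  have lv: "length v = m" using mv onto m_def by (metis size_image_mset size_mset)
  have "mset u = mset (map \<phi> v)" using mu mv onto by simp
  then obtain \<sigma> where \<sigma>: "\<sigma> permutes {..<length (map \<phi> v)}" "permute_list \<sigma> (map \<phi> v) = u"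
    by (rule mset_eq_permutation)
  have perm: "\<sigma> permutes {..<m}" using \<sigma> lv by simp
  have bound: "cmod (u ! k - v ! (\<sigma> k)) \<le> e" if "k < m" for k
  proof -
    have \<sigma>k: "\<sigma> k < m" using perm that by (meson lessThan_iff permutes_in_image)
    have "u ! k = \<phi> (v ! (\<sigma> k))" using \<sigma> that lv \<sigma>k by (auto simp: permute_list_nth)
    moreover have "v ! (\<sigma> k) \<in># B" using mv \<sigma>k lv by (metis nth_mem_mset)
    ultimately show ?thesis using close by (simp add: norm_minus_commute)
  qed
  have "Max ((\<lambda>k. cmod (u ! k - v ! (\<sigma> k))) ` {..<m}) \<le> e"
    using bound nonempty m_def by (subst Max_le_iff) auto
  moreover have "Min ((\<lambda>\<sigma>. Max ((\<lambda>k. cmod (u ! k - v ! (\<sigma> k))) ` {..<m}))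
          ` {\<sigma>. \<sigma> permutes {..<m}}) \<le> Max ((\<lambda>k. cmod (u ! k - v ! (\<sigma> k))) ` {..<m})"
    using perm by (intro Min_le) (auto intro: finite_permutations)
  ultimately show ?thesis unfolding dF_def Let_def u_def v_def m_def by linarith
qed

lemma dF_nonneg:
  assumes "size A > 0"
  shows "0 \<le> dF A B"
proof -
  have "0 \<le> Max ((\<lambda>k. cmod (u ! k - v ! (\<sigma> k))) ` {..<size A})" for u v :: "complex list" and \<sigma>
    using assms by (subst Max_ge_iff) auto
  then show ?thesis
    unfolding dF_def Let_def by (subst Min_ge_iff) (auto intro: finite_permutations permutes_id)
qed

text \<open>Matching two multisets of equal size: if \<open>R\<close> consists of distinct points that are more than
  \<open>2 e\<close> apart and every point of either multiset is within \<open>e\<close> of the other, then sending each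
  point of \<open>S\<close> to its (unique) \<open>e\<close>-close point of \<open>R\<close> maps \<open>S\<close> onto \<open>R\<close>.\<close>

lemma matching_of_separated:
  fixes R S :: "complex multiset"
  assumes simple: "\<forall>r. count R r \<le> 1" and size_eq: "size S = size R"
    and S_near_R: "\<forall>s\<in>#S. \<exists>r\<in>#R. cmod (s - r) \<le> e"
    and R_near_S: "\<forall>r\<in>#R. \<exists>s\<in>#S. cmod (s - r) \<le> e"
    and separated: "\<forall>r\<in>#R. \<forall>r'\<in>#R. r \<noteq> r' \<longrightarrow> 2*e < cmod (r - r')"
  shows "\<exists>\<phi>. image_mset \<phi> S = R \<and> (\<forall>s\<in>#S. cmod (\<phi> s - s) \<le> e)"
proof -
  define \<phi> where "\<phi> s = (SOME r. r \<in># R \<and> cmod (s - r) \<le> e)" for s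
  have \<phi>: "\<phi> s \<in># R \<and> cmod (s - \<phi> s) \<le> e" if "s \<in># S" for s
    unfolding \<phi>_def by (rule someI_ex) (use S_near_R that in blast)
  have \<phi>_unique: "\<phi> s = r" if "s \<in># S" "r \<in># R" "cmod (s - r) \<le> e" for s r
  proof (rule ccontr)
    assume ne: "\<phi> s \<noteq> r"
    have "cmod (\<phi> s - r) \<le> cmod (s - \<phi> s) + cmod (s - r)"
      by (metis norm_diff_triangle_le norm_minus_commute order_refl)
    then have "cmod (\<phi> s - r) \<le> 2 * e" using \<phi>[OF that(1)] that(3) by linarith
    with separated \<phi>[OF that(1)] that(2) ne show False by force
  qed
  have "R \<subseteq># image_mset \<phi> S"
  proof (rule mset_subset_eqI)
    fix r
    show "count R r \<le> count (image_mset \<phi> S) r"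
    proof (cases "r \<in># R")
      case True
      then obtain s where "s \<in># S" "cmod (s - r) \<le> e" using R_near_S by blast
      then have "r \<in># image_mset \<phi> S" using \<phi>_unique True by (metis image_eqI set_image_mset)
      then have "count (image_mset \<phi> S) r > 0" by (simp only: count_greater_zero_iff)
      then show ?thesis using simple[rule_format, of r] by linarith
    qed (simp add: not_in_iff)
  qed
  then obtain C where C: "image_mset \<phi> S = R + C" by (metis mset_subset_eq_exists_conv)
  then have "size C = 0" using size_eq by (metis size_image_mset size_union add_cancel_right_right)
  then have "image_mset \<phi> S = R" using C by simp
  moreover have "\<forall>s\<in>#S. cmod (\<phi> s - s) \<le> e" using \<phi> by (simp add: norm_minus_commute)
  ultimately show ?thesis by blast
qed

section \<open>Lower bounds for monic polynomials\<close>

lemma prod_mset_pow_le: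
  fixes f :: "'a \<Rightarrow> real"
  assumes "\<forall>x\<in>#M. t \<le> f x" "0 \<le> t"
  shows "t ^ size M \<le> (\<Prod>x\<in>#M. f x)"
  using assms
proof (induction M)
  case (add x M)
  then show ?case by (simp add: mult_mono order_trans[OF \<open>0 \<le> t\<close>])
qed simp

lemma root_of_monic:
  fixes p :: "complex poly"
  assumes "lead_coeff p = 1" and "r \<in># proots p"
  shows "poly p r = 0"
proof -
  have "p \<noteq> 0" using assms(1) by auto
  then show ?thesis using assms(2) by simp
qed

lemma norm_poly_monic:
  fixes p :: "complex poly"
  assumes "lead_coeff p = 1"
  shows "cmod (poly p z) = (\<Prod>r\<in>#proots p. cmod (z - r))"
proof -
  have "p = (\<Prod>x\<in>#proots p. [:-x, 1:])"
    using complex_poly_decompose_multiset[of p] assms by simp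
  then have "poly p z = (\<Prod>x\<in>#proots p. poly [:-x, 1:] z)"
    by (metis poly_prod_mset)
  also have "\<dots> = (\<Prod>x\<in>#proots p. z - x)" by simp
  finally have "poly p z = (\<Prod>x\<in>#proots p. z - x)" .
  moreover have "cmod (\<Prod>x\<in>#M. z - x) = (\<Prod>x\<in>#M. cmod (z - x))" for M
    by (induction M) (auto simp: norm_mult)
  ultimately show ?thesis by simp
qed

lemma monic_value_lower_bound:
  fixes P :: "complex poly"
  assumes monic: "lead_coeff P = 1" and r0: "r0 \<in># proots P"
    and far: "\<forall>r\<in>#proots P - {#r0#}. t \<le> cmod (z - r)" and t: "0 \<le> t"
  shows "cmod (z - r0) * t ^ (size (proots P) - 1) \<le> cmod (poly P z)"
proof -
  define M where "M = proots P - {#r0#}"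
  have roots: "proots P = add_mset r0 M" using r0 M_def by simp
  have "t ^ size M \<le> (\<Prod>r\<in>#M. cmod (z - r))"
    using prod_mset_pow_le[of M t "\<lambda>r. cmod (z - r)"] far t M_def by simp
  then have "cmod (z - r0) * t ^ size M \<le> cmod (z - r0) * (\<Prod>r\<in>#M. cmod (z - r))"
    by (simp add: mult_left_mono)
  also have "\<dots> = cmod (poly P z)" using norm_poly_monic[OF monic] roots by simp
  finally show ?thesis using roots by simp
qed

lemma lone_root_close:
  fixes P :: "complex poly"
  assumes monic: "lead_coeff P = 1" and deg: "degree P = n" and n2: "n \<ge> 2"
    and r0: "r0 \<in># proots P"
    and far: "\<forall>r\<in>#proots P - {#r0#}. \<tau> \<le> cmod (z - r) \<and> 1 + cmod z \<le> cmod (z - r) + 2*\<rho>"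
    and small: "cmod (poly P z) \<le> D * (1 + cmod z) ^ (n-2)"
    and \<tau>: "0 < \<tau>" and \<rho>: "0 \<le> \<rho>" and large: "D * (1 + 2*\<rho>/\<tau>) ^ (n-2) < \<epsilon> * \<tau>"
  shows "cmod (z - r0) < \<epsilon>"
proof -
  define K where "K = 1 + 2*\<rho>/\<tau>"
  define t where "t = max \<tau> ((1 + cmod z) / K)"
  have K: "K > 0" using \<tau> \<rho> unfolding K_def by (simp add: add_pos_nonneg)
  have "t \<le> cmod (z - r)" if "r \<in># proots P - {#r0#}" for r
  proof -
    have "2*\<rho> \<le> (2*\<rho>/\<tau>) * cmod (z - r)"
      using far that \<tau> \<rho> by (simp add: field_simps mult_left_mono)
    then have "1 + cmod z \<le> K * cmod (z - r)"
      using far that unfolding K_def by (auto simp: algebra_simps)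
    then show ?thesis using far that K unfolding t_def by (simp add: field_simps)
  qed
  then have "cmod (z - r0) * t ^ (n-1) \<le> cmod (poly P z)"
    using monic_value_lower_bound[OF monic r0, of t z] \<tau> deg size_proots_complex[of P]
    unfolding t_def by auto
  moreover have "\<tau> * ((1 + cmod z) / K) ^ (n-2) \<le> t ^ (n-1)"
  proof -
    have "\<tau> * ((1 + cmod z) / K) ^ (n-2) \<le> t * t ^ (n-2)"
      using \<tau> K unfolding t_def by (intro mult_mono power_mono) auto
    then show ?thesis using n2 by (simp add: power_Suc[symmetric] Suc_diff_Suc numeral_2_eq_2)
  qed
  ultimately have "cmod (z - r0) * (\<tau> * ((1 + cmod z) / K) ^ (n-2)) \<le> D * (1 + cmod z) ^ (n-2)"
    using small by (meson mult_left_mono norm_ge_zero order_trans)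
  also have "\<dots> = D * K ^ (n-2) * ((1 + cmod z) / K) ^ (n-2)"
    using K by (simp add: power_divide)
  also have "\<dots> < \<epsilon> * (\<tau> * ((1 + cmod z) / K) ^ (n-2))"
    using large K unfolding K_def[symmetric] by (simp add: add_pos_nonneg)
  finally show ?thesis using \<tau> K by (simp add: add_pos_nonneg)
qed

section \<open>Roots of a perturbed polynomial with well separated roots\<close>

locale separated_perturbation =
  fixes F H :: "complex poly" and n :: nat and \<delta> \<rho> b D \<epsilon> :: real
  assumes n2: "n \<ge> 2" and deg_F: "degree F = n" and deg_H: "degree H = n"
    and monic_F: "lead_coeff F = 1" and monic_H: "lead_coeff H = 1"
    and simple: "\<forall>r. count (proots H) r \<le> 1"
    and separated: "\<forall>r\<in>#proots H. \<forall>r'\<in>#proots H. r \<noteq> r' \<longrightarrow> \<delta>*\<rho> \<le> cmod (r - r')"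
    and roots_bounded: "\<forall>r\<in>#proots H. cmod r \<le> \<rho> + b"
    and difference: "\<forall>z. cmod (poly F z - poly H z) \<le> D * (1 + cmod z) ^ (n-2)"
    and \<delta>: "\<delta> > 0" and b: "b \<ge> 0"
    and large: "b + 1 \<le> \<rho>" "\<epsilon> < \<delta>*\<rho>/2" "D * (1 + 4/\<delta>) ^ (n-2) < \<epsilon> * (\<delta>*\<rho>/2)"
begin

lemma \<rho>_pos: "\<rho> > 0"
  using large b by linarith

text \<open>The size condition of the lone-root estimate for \<open>\<tau> = \<delta> \<rho> / 2\<close>.\<close>

lemma large_for_lone_root: "D * (1 + 2*\<rho>/(\<delta>*\<rho>/2)) ^ (n-2) < \<epsilon> * (\<delta>*\<rho>/2)"
proof -
  have "2*\<rho>/(\<delta>*\<rho>/2) = 4/\<delta>" using \<rho>_pos by (simp add: field_simps)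
  then show ?thesis using large(3) by simp
qed

lemma size_roots: "size (proots F) = n" "size (proots H) = n"
  using deg_F deg_H size_proots_complex by simp_all

lemma roots_nonempty: "\<exists>r. r \<in># proots F" "\<exists>r. r \<in># proots H"
  using size_roots n2 by (metis multiset_nonemptyE size_empty not_numeral_le_zero)+

lemma roots_F_near_H:
  assumes s: "s \<in># proots F"
  shows "\<exists>r\<in>#proots H. cmod (s - r) < \<epsilon>"
proof -
  text \<open>Choose \<open>r\<^sub>0\<close> so that all other roots of \<open>H\<close> are at least \<open>\<delta> \<rho> / 2\<close> away from \<open>s\<close>: the root
    within that distance if there is one (it is unique by separation), any root otherwise.\<close>
  obtain r0 where r0: "r0 \<in># proots H" "\<forall>r\<in>#proots H. r \<noteq> r0 \<longrightarrow> \<delta>*\<rho>/2 \<le> cmod (s - r)"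
  proof (cases "\<exists>r\<in>#proots H. cmod (s - r) < \<delta>*\<rho>/2")
    case True
    then obtain r0 where r0: "r0 \<in># proots H" "cmod (s - r0) < \<delta>*\<rho>/2" by blast
    have "\<delta>*\<rho>/2 \<le> cmod (s - r)" if "r \<in># proots H" "r \<noteq> r0" for r
    proof (rule ccontr)
      assume "\<not> \<delta>*\<rho>/2 \<le> cmod (s - r)"
      moreover have "cmod (r - r0) \<le> cmod (s - r) + cmod (s - r0)"
        by (metis norm_diff_triangle_le norm_minus_commute order_refl)
      ultimately have "cmod (r - r0) < \<delta>*\<rho>" using r0 by linarith
      with separated that r0 show False by force
    qed
    then show ?thesis using that r0 by blast
  next
    case False
    then show ?thesis using that roots_nonempty(2) by force
  qed
  have far: "\<delta>*\<rho>/2 \<le> cmod (s - r) \<and> 1 + cmod s \<le> cmod (s - r) + 2*\<rho>"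
    if r: "r \<in># proots H - {#r0#}" for r
  proof
    have rH: "r \<in># proots H" using r by (rule in_diffD)
    have "r \<noteq> r0" using r simple[rule_format, of r0] by (auto simp: in_diff_count)
    then show "\<delta>*\<rho>/2 \<le> cmod (s - r)" using r0(2) rH by blast
    have "cmod r \<le> \<rho> + b" using roots_bounded rH by blast
    then show "1 + cmod s \<le> cmod (s - r) + 2*\<rho>"
      using norm_triangle_sub[of s r] large(1) by linarith
  qed
  have "cmod (poly H s) = cmod (poly F s - poly H s)"
    using root_of_monic[OF monic_F s] by (simp add: norm_minus_commute)
  then have small: "cmod (poly H s) \<le> D * (1 + cmod s) ^ (n-2)" using difference by simp
  have "cmod (s - r0) < \<epsilon>"
    using lone_root_close[OF monic_H deg_H n2 r0(1) _ small _ _ large_for_lone_root] far \<delta> \<rho>_pos by auto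
  then show ?thesis using r0 by blast
qed

lemma roots_H_near_F:
  assumes r: "r \<in># proots H"
  shows "\<exists>s\<in>#proots F. cmod (s - r) < \<epsilon>"
proof (rule ccontr)
  assume "\<not> ?thesis"
  then have no: "\<forall>s\<in>#proots F. \<epsilon> \<le> cmod (s - r)" by (simp add: not_less)
  text \<open>Each root of \<open>F\<close> is \<open>\<epsilon>\<close>-close to a root of \<open>H\<close> other than \<open>r\<close>, hence far from \<open>r\<close>.\<close>
  have far: "\<delta>*\<rho>/2 \<le> cmod (r - s) \<and> 1 + cmod r \<le> cmod (r - s) + 2*\<rho>"
    if s: "s \<in># proots F" for s
  proof
    obtain r' where r': "r' \<in># proots H" "cmod (s - r') < \<epsilon>" using roots_F_near_H[OF s] by blast
    then have "r \<noteq> r'" using no s by force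
    then have "\<delta>*\<rho> \<le> cmod (r - r')" using separated r r'(1) by simp
    moreover have "cmod (r - r') \<le> cmod (r - s) + cmod (s - r')"
      using norm_triangle_ineq[of "r - s" "s - r'"] by simp
    ultimately show "\<delta>*\<rho>/2 \<le> cmod (r - s)" using r' large(2) by linarith
    have "cmod r \<le> \<rho> + b" using roots_bounded r by blast
    then show "1 + cmod r \<le> cmod (r - s) + 2*\<rho>"
      using large(1) norm_ge_zero[of "r - s"] by linarith
  qed
  obtain s0 where s0: "s0 \<in># proots F" using roots_nonempty(1) by blast
  have "cmod (poly F r) = cmod (poly F r - poly H r)"
    using root_of_monic[OF monic_H r] by simp
  then have small: "cmod (poly F r) \<le> D * (1 + cmod r) ^ (n-2)" using difference by simp
  have "cmod (r - s0) < \<epsilon>"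
    using lone_root_close[OF monic_F deg_F n2 s0 _ small _ _ large_for_lone_root] far \<delta> \<rho>_pos
    by (auto dest: in_diffD)
  moreover have "\<epsilon> \<le> cmod (r - s0)" using no s0 by (metis norm_minus_commute)
  ultimately show False by simp
qed

theorem dF_le:
  shows "dF (proots H) (proots F) \<le> \<epsilon>"
proof -
  have "\<forall>r\<in>#proots H. \<forall>r'\<in>#proots H. r \<noteq> r' \<longrightarrow> 2*\<epsilon> < cmod (r - r')"
    using separated large(2) by fastforce
  moreover have "\<forall>s\<in>#proots F. \<exists>r\<in>#proots H. cmod (s - r) \<le> \<epsilon>"
    using roots_F_near_H by (meson less_imp_le)
  moreover have "\<forall>r\<in>#proots H. \<exists>s\<in>#proots F. cmod (s - r) \<le> \<epsilon>"
    using roots_H_near_F by (meson less_imp_le)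
  ultimately obtain \<phi> where "image_mset \<phi> (proots F) = proots H"
      "\<forall>s\<in>#proots F. cmod (\<phi> s - s) \<le> \<epsilon>"
    using matching_of_separated[of "proots H" "proots F" \<epsilon>] simple size_roots by auto
  then show ?thesis using dF_le_matching size_roots n2 by simp
qed

end


section \<open>The polynomials of the corollary\<close>

lemma binomial_poly:
  assumes "n \<ge> 1"
  shows "degree (monom 1 n + [:A::complex:]) = n" and "lead_coeff (monom 1 n + [:A:]) = 1"
proof -
  show deg: "degree (monom 1 n + [:A::complex:]) = n"
    using assms by (subst degree_add_eq_left) (auto simp: degree_monom_eq)
  have "coeff [:A:] n = 0" using assms by (cases n) auto
  then show "lead_coeff (monom 1 n + [:A:]) = 1" unfolding deg by (simp add: coeff_monom)
qed

lemma shifted_binomial: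
  assumes "n \<ge> 1"
  shows "poly (shift_poly \<beta> (monom 1 n + [:A:])) z = (\<beta> + z)^n + A"
    and "degree (shift_poly \<beta> (monom 1 n + [:A:])) = n"
    and "lead_coeff (shift_poly \<beta> (monom 1 n + [:A:])) = 1"
    and "poly (pderiv (shift_poly \<beta> (monom 1 n + [:A:]))) z = of_nat n * (\<beta> + z)^(n-1)"
proof -
  show "poly (shift_poly \<beta> (monom 1 n + [:A:])) z = (\<beta> + z)^n + A"
    by (simp add: shift_poly_def poly_pcompose poly_monom)
  show "degree (shift_poly \<beta> (monom 1 n + [:A:])) = n"
    using binomial_poly[OF assms] by (simp add: shift_poly_def degree_pcompose)
  show "lead_coeff (shift_poly \<beta> (monom 1 n + [:A:])) = 1"
    using binomial_poly[OF assms] unfolding shift_poly_def by (subst lead_coeff_comp) auto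
  show "poly (pderiv (shift_poly \<beta> (monom 1 n + [:A:]))) z = of_nat n * (\<beta> + z)^(n-1)"
    by (simp add: shift_poly_def pderiv_pcompose poly_pcompose pderiv_add pderiv_monom
        poly_monom pderiv_pCons)
qed

lemma shifted_binomial_root:
  assumes "n \<ge> 1" and "r \<in># proots (shift_poly \<beta> (monom 1 n + [:A:]))"
  shows "(\<beta> + r)^n = - A"
  using root_of_monic[OF shifted_binomial(3)[OF assms(1)] assms(2)] shifted_binomial(1)[OF assms(1)]
  by (simp add: eq_neg_iff_add_eq_0)

text \<open>For \<open>A \<noteq> 0\<close> the shifted binomial has no root in common with its derivative, so all
  roots are simple.\<close>

lemma shifted_binomial_simple:
  assumes "n \<ge> 1" and "A \<noteq> 0"
  shows "count (proots (shift_poly \<beta> (monom 1 n + [:A:]))) r \<le> 1"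
proof -
  have "rsquarefree (shift_poly \<beta> (monom 1 n + [:A:]))"
  proof (subst rsquarefree_roots, intro allI notI)
    fix z assume z: "poly (shift_poly \<beta> (monom 1 n + [:A:])) z = 0 \<and>
      poly (pderiv (shift_poly \<beta> (monom 1 n + [:A:]))) z = 0"
    then have "\<beta> + z = 0" using shifted_binomial(4)[OF assms(1)] assms(1) by simp
    then show False using z shifted_binomial(1)[OF assms(1)] assms by (simp add: zero_power)
  qed
  then show ?thesis unfolding rsquarefree_def by (metis count_proots le_refl zero_le_one)
qed

text \<open>The roots of \<open>(\<beta> + z)\<^sup>n + a\<^sup>n\<close> are \<open>-\<beta> + a w\<close> with \<open>w\<^sup>n = -1\<close>: they inherit the separation
  of the \<open>n\<close>-th roots of \<open>-1\<close>, scaled by \<open>|a|\<close>, and have modulus at most \<open>|a| + |\<beta>|\<close>.\<close>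

lemma shifted_binomial_roots_separated:
  assumes "n \<ge> 1" and "a \<noteq> 0"
    and sep: "\<forall>w w'. w^n = -1 \<and> w'^n = -1 \<and> w \<noteq> w' \<longrightarrow> \<delta> \<le> cmod (w - w')"
    and r: "r \<in># proots (shift_poly \<beta> (monom 1 n + [:a^n:]))"
    and r': "r' \<in># proots (shift_poly \<beta> (monom 1 n + [:a^n:]))" and "r \<noteq> r'"
  shows "\<delta> * cmod a \<le> cmod (r - r')"
proof -
  define w where "w = (\<beta> + r) / a"
  define w' where "w' = (\<beta> + r') / a"
  have "w^n = -1" "w'^n = -1"
    using shifted_binomial_root[OF assms(1) r] shifted_binomial_root[OF assms(1) r'] assms(2)
    unfolding w_def w'_def by (simp_all add: power_divide)
  moreover have "w \<noteq> w'" unfolding w_def w'_def using assms by (simp add: divide_cancel_right)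
  ultimately have "\<delta> \<le> cmod (w - w')" using sep by blast
  moreover have "r - r' = a * (w - w')" unfolding w_def w'_def using assms(2) by (simp add: field_simps)
  ultimately show ?thesis using assms(2) by (simp add: norm_mult mult.commute)
qed

lemma shifted_binomial_roots_bounded:
  assumes "n \<ge> 1" and r: "r \<in># proots (shift_poly \<beta> (monom 1 n + [:a^n:]))"
  shows "cmod r \<le> cmod a + cmod \<beta>"
proof -
  have "cmod (\<beta> + r) ^ n = cmod a ^ n"
    using shifted_binomial_root[OF assms] by (metis norm_minus_cancel norm_power)
  then have "cmod (\<beta> + r) = cmod a" using assms(1) by (simp add: power_eq_iff_eq_base)
  then show ?thesis using norm_triangle_ineq4[of "\<beta> + r" \<beta>] by simp
qed

lemma finite_set_separated:
  fixes W :: "'a::metric_space set"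
  assumes "finite W"
  shows "\<exists>\<delta>>0. \<forall>w\<in>W. \<forall>w'\<in>W. w \<noteq> w' \<longrightarrow> \<delta> \<le> dist w w'"
proof -
  define ds where "ds = (\<lambda>(w,w'). dist w w') ` {(w,w'). w \<in> W \<and> w' \<in> W \<and> w \<noteq> w'}"
  have fin: "finite ds" unfolding ds_def
    by (rule finite_imageI, rule finite_subset[of _ "W \<times> W"]) (use assms in auto)
  define \<delta> where "\<delta> = Min (insert 1 ds)"
  have "\<delta> > 0" unfolding \<delta>_def using fin by (subst Min_gr_iff) (auto simp: ds_def)
  moreover have "\<delta> \<le> dist w w'" if "w \<in> W" "w' \<in> W" "w \<noteq> w'" for w w'
  proof -
    have "dist w w' \<in> ds" unfolding ds_def using that by force
    then show ?thesis unfolding \<delta>_def using fin by (intro Min_le) auto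
  qed
  ultimately show ?thesis by blast
qed

lemma roots_of_minus_one_separated:
  assumes "n \<ge> 1"
  shows "\<exists>\<delta>>0. \<forall>w w'. w^n = -1 \<and> w'^n = -1 \<and> w \<noteq> w' \<longrightarrow> \<delta> \<le> cmod (w - w')"
proof -
  have "finite {w::complex. w^(2*n) = 1}" using assms by (intro finite_roots_unity) auto
  moreover have "{w::complex. w^n = -1} \<subseteq> {w. w^(2*n) = 1}"
    by (auto simp: power_mult mult.commute[of 2 n])
  ultimately have "finite {w::complex. w^n = -1}" by (rule finite_subset[rotated])
  from finite_set_separated[OF this] show ?thesis by (auto simp: dist_norm)
qed

lemma monic_lower_terms_poly:
  fixes c :: "nat \<Rightarrow> complex"
  assumes "n \<ge> 2"
  shows "degree (monom 1 n + (\<Sum>k = 1..n - 1. monom (c k) k) + [:A:]) = n"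
    and "lead_coeff (monom 1 n + (\<Sum>k = 1..n - 1. monom (c k) k) + [:A:]) = 1"
    and "poly (monom 1 n + (\<Sum>k = 1..n - 1. monom (c k) k) + [:A:]) z
           = z^n + (\<Sum>k = 1..n - 1. c k * z^k) + A"
proof -
  have "degree (\<Sum>k = 1..n - 1. monom (c k) k) \<le> n - 1"
    by (rule degree_sum_le) (auto intro: order_trans[OF degree_monom_le])
  then have lower: "degree (\<Sum>k = 1..n - 1. monom (c k) k) < n" using assms by linarith
  then have "degree (monom 1 n + (\<Sum>k = 1..n - 1. monom (c k) k)) = n"
    by (subst degree_add_eq_left) (auto simp: degree_monom_eq)
  then show deg: "degree (monom 1 n + (\<Sum>k = 1..n - 1. monom (c k) k) + [:A:]) = n"
    using assms by (subst degree_add_eq_left) auto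
  have "coeff (\<Sum>k = 1..n - 1. monom (c k) k) n = 0" using lower by (simp add: coeff_eq_0)
  moreover have "coeff [:A:] n = 0" using assms by (cases n) auto
  ultimately show "lead_coeff (monom 1 n + (\<Sum>k = 1..n - 1. monom (c k) k) + [:A:]) = 1"
    unfolding deg by simp
  show "poly (monom 1 n + (\<Sum>k = 1..n - 1. monom (c k) k) + [:A:]) z
          = z^n + (\<Sum>k = 1..n - 1. c k * z^k) + A"
    by (simp add: poly_sum poly_monom)
qed

lemma norm_sum_powers_le:
  fixes e :: "nat \<Rightarrow> complex"
  assumes "\<forall>k\<in>A. k \<le> m"
  shows "cmod (\<Sum>k\<in>A. e k * z^k) \<le> (\<Sum>k\<in>A. cmod (e k)) * (1 + cmod z)^m"
proof -
  have "cmod (\<Sum>k\<in>A. e k * z^k) \<le> (\<Sum>k\<in>A. cmod (e k * z^k))" by (rule norm_sum)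
  also have "\<dots> \<le> (\<Sum>k\<in>A. cmod (e k) * (1 + cmod z)^m)"
  proof (rule sum_mono)
    fix k assume k: "k \<in> A"
    have "cmod z ^ k \<le> (1 + cmod z)^k" by (rule power_mono) auto
    also have "\<dots> \<le> (1 + cmod z)^m" using assms k by (intro power_increasing) auto
    finally show "cmod (e k * z^k) \<le> cmod (e k) * (1 + cmod z)^m"
      by (simp add: norm_mult norm_power mult_left_mono)
  qed
  also have "\<dots> = (\<Sum>k\<in>A. cmod (e k)) * (1 + cmod z)^m" by (simp add: sum_distrib_right)
  finally show ?thesis .
qed

text \<open>The shift by \<open>\<beta> = c(n-1)/n\<close> is chosen so that \<open>(\<beta> + z)\<^sup>n\<close> and
  \<open>z\<^sup>n + c(n-1) z\<^sup>n\<^sup>-\<^sup>1 + \<dots> + c 1 z\<close> agree in degrees \<open>n\<close> and \<open>n - 1\<close>: their difference is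
  bounded like a polynomial of degree \<open>n - 2\<close>.\<close>

lemma lower_terms_difference_bound:
  fixes c :: "nat \<Rightarrow> complex"
  assumes "n \<ge> 2"
  shows "\<exists>D. \<forall>z. cmod ((z^n + (\<Sum>k=1..n-1. c k * z^k)) - (c (n-1) / of_nat n + z)^n)
             \<le> D * (1 + cmod z)^(n-2)"
proof -
  obtain m where n: "n = Suc (Suc m)" using assms by (metis add_2_eq_Suc le_Suc_ex)
  define \<beta> where "\<beta> = c (Suc m) / of_nat n"
  define e where "e k = of_nat (n choose k) * \<beta>^(n-k)" for k
  define D where "D = (\<Sum>k=1..m. cmod (c k)) + (\<Sum>k\<le>m. cmod (e k))"
  have n\<beta>: "of_nat n * \<beta> = c (Suc m)" unfolding \<beta>_def n by (simp del: of_nat_Suc)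
  have "(\<beta> + z)^n = (\<Sum>k\<le>n. of_nat (n choose k) * z^k * \<beta>^(n-k))" for z
    using binomial_ring[of z \<beta> n] by (simp add: add.commute)
  also have "\<dots> z = (\<Sum>k\<le>m. e k * z^k) + c (Suc m) * z^Suc m + z^n" for z
    unfolding n e_def by (simp add: n\<beta>[symmetric, unfolded n] algebra_simps)
  finally have binomial: "(\<beta> + z)^n = (\<Sum>k\<le>m. e k * z^k) + c (Suc m) * z^Suc m + z^n" for z .
  have "cmod ((z^n + (\<Sum>k=1..Suc m. c k * z^k)) - (\<beta> + z)^n) \<le> D * (1 + cmod z)^m" for z
  proof -
    have "(z^n + (\<Sum>k=1..Suc m. c k * z^k)) - (\<beta> + z)^n
            = (\<Sum>k=1..m. c k * z^k) - (\<Sum>k\<le>m. e k * z^k)"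
      using binomial[of z] by (simp add: sum.cl_ivl_Suc)
    then have "cmod ((z^n + (\<Sum>k=1..Suc m. c k * z^k)) - (\<beta> + z)^n)
        \<le> cmod (\<Sum>k=1..m. c k * z^k) + cmod (\<Sum>k\<le>m. e k * z^k)"
      by (simp only: norm_triangle_ineq4)
    also have "\<dots> \<le> (\<Sum>k=1..m. cmod (c k)) * (1 + cmod z)^m + (\<Sum>k\<le>m. cmod (e k)) * (1 + cmod z)^m"
      by (intro add_mono norm_sum_powers_le) auto
    finally show ?thesis unfolding D_def by (simp add: algebra_simps)
  qed
  then show ?thesis unfolding \<beta>_def n by auto
qed

lemma dF_le_for_large_a:
  fixes n :: nat and c :: "nat \<Rightarrow> complex" and a :: complex
  defines "\<beta> \<equiv> c (n - 1) / of_nat n"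
    and "F \<equiv> monom 1 n + (\<Sum>k = 1..n - 1. monom (c k) k) + [:a ^ n:]"
    and "H \<equiv> shift_poly (c (n - 1) / of_nat n) (monom 1 n + [:a ^ n:])"
  assumes n2: "n \<ge> 2"
    and sep: "\<forall>w w'. w^n = -1 \<and> w'^n = -1 \<and> w \<noteq> w' \<longrightarrow> \<delta> \<le> cmod (w - w')" and \<delta>: "\<delta> > 0"
    and D: "\<forall>z. cmod ((z^n + (\<Sum>k=1..n-1. c k * z^k)) - (\<beta> + z)^n) \<le> D * (1 + cmod z)^(n-2)"
    and \<epsilon>: "\<epsilon> > 0"
    and large: "cmod \<beta> + 1 \<le> cmod a" "\<epsilon> < \<delta> * cmod a / 2"
      "D * (1 + 4/\<delta>)^(n-2) < \<epsilon> * (\<delta> * cmod a / 2)"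
  shows "dF (proots H) (proots F) \<le> \<epsilon>"
proof -
  have n1: "n \<ge> 1" using n2 by simp
  have "0 < cmod a" using large(1) norm_ge_zero[of \<beta>] by linarith
  then have a: "a \<noteq> 0" by auto
  have H: "H = shift_poly \<beta> (monom 1 n + [:a ^ n:])" unfolding H_def \<beta>_def ..
  interpret separated_perturbation F H n \<delta> "cmod a" "cmod \<beta>" D \<epsilon>
  proof
    show "degree F = n" "lead_coeff F = 1"
      unfolding F_def using monic_lower_terms_poly[OF n2] by blast+
    show "degree H = n" "lead_coeff H = 1"
      unfolding H using shifted_binomial[OF n1] by blast+
    show "\<forall>r. count (proots H) r \<le> 1"
      unfolding H using shifted_binomial_simple[OF n1] a by simp
    show "\<forall>r\<in>#proots H. \<forall>r'\<in>#proots H. r \<noteq> r' \<longrightarrow> \<delta> * cmod a \<le> cmod (r - r')"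
      unfolding H using shifted_binomial_roots_separated[OF n1 a sep] by blast
    show "\<forall>r\<in>#proots H. cmod r \<le> cmod a + cmod \<beta>"
      unfolding H using shifted_binomial_roots_bounded[OF n1] by blast
    show "\<forall>z. cmod (poly F z - poly H z) \<le> D * (1 + cmod z) ^ (n - 2)"
      using D unfolding F_def H
      by (simp add: monic_lower_terms_poly(3)[OF n2] shifted_binomial(1)[OF n1] poly_sum poly_monom)
  qed (use n2 \<delta> large in simp_all)
  show ?thesis by (rule dF_le)
qed

lemma eventually_norm_large:
  fixes C D K :: real
  assumes \<delta>: "\<delta> > 0" and \<epsilon>: "\<epsilon> > 0"
  shows "\<forall>\<^sub>F a in at_infinity. C \<le> norm a \<and> \<epsilon> < \<delta> * norm a / 2 \<and> D * K < \<epsilon> * (\<delta> * norm a / 2)"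
proof -
  define B where "B = max C (max (2*\<epsilon>/\<delta>) (2*D*K / (\<epsilon>*\<delta>)))"
  have "C \<le> norm a \<and> \<epsilon> < \<delta> * norm a / 2 \<and> D * K < \<epsilon> * (\<delta> * norm a / 2)"
    if "B + 1 \<le> norm a" for a :: 'a
  proof (intro conjI)
    show "C \<le> norm a" using that unfolding B_def by linarith
    have "2*\<epsilon>/\<delta> < norm a" using that unfolding B_def by linarith
    then show "\<epsilon> < \<delta> * norm a / 2" using \<delta> by (simp add: divide_less_eq mult.commute)
    have "2*D*K / (\<epsilon>*\<delta>) < norm a" using that unfolding B_def by linarith
    then have "2*D*K < norm a * (\<epsilon>*\<delta>)" using \<delta> \<epsilon> by (simp add: divide_less_eq)
    then show "D * K < \<epsilon> * (\<delta> * norm a / 2)" by (simp add: algebra_simps)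
  qed
  then show ?thesis unfolding eventually_at_infinity by blast
qed

lemma eventually_dF_le:
  fixes n :: nat and c :: "nat \<Rightarrow> complex"
  assumes n2: "n \<ge> 2" and \<epsilon>: "\<epsilon> > 0"
  shows "\<forall>\<^sub>F a in at_infinity.
           dF (proots (shift_poly (c (n - 1) / of_nat n) (monom 1 n + [:a ^ n:])))
              (proots (monom 1 n + (\<Sum>k = 1..n - 1. monom (c k) k) + [:a ^ n:])) \<le> \<epsilon>"
proof -
  define \<beta> where "\<beta> = c (n - 1) / of_nat n"
  obtain D where D: "\<forall>z. cmod ((z^n + (\<Sum>k=1..n-1. c k * z^k)) - (\<beta> + z)^n) \<le> D * (1 + cmod z)^(n-2)"
    using lower_terms_difference_bound[OF n2, of c] unfolding \<beta>_def by (elim exE)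
  obtain \<delta> where \<delta>: "\<delta> > 0" "\<forall>w w'. w^n = -1 \<and> w'^n = -1 \<and> w \<noteq> w' \<longrightarrow> \<delta> \<le> cmod (w - w')"
    using roots_of_minus_one_separated[of n] n2 by auto
  have "\<forall>\<^sub>F a in at_infinity. cmod \<beta> + 1 \<le> cmod a \<and> \<epsilon> < \<delta> * cmod a / 2
          \<and> D * (1 + 4/\<delta>)^(n-2) < \<epsilon> * (\<delta> * cmod a / 2)"
    by (rule eventually_norm_large[OF \<delta>(1) \<epsilon>])
  then show ?thesis
  proof (rule eventually_mono)
    fix a :: complex
    assume "cmod \<beta> + 1 \<le> cmod a \<and> \<epsilon> < \<delta> * cmod a / 2 \<and> D * (1 + 4/\<delta>)^(n-2) < \<epsilon> * (\<delta> * cmod a / 2)"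
    then show "dF (proots (shift_poly (c (n - 1) / of_nat n) (monom 1 n + [:a ^ n:])))
        (proots (monom 1 n + (\<Sum>k = 1..n - 1. monom (c k) k) + [:a ^ n:])) \<le> \<epsilon>"
      using dF_le_for_large_a[OF n2 \<delta>(2) \<delta>(1) D[unfolded \<beta>_def] \<epsilon>] unfolding \<beta>_def by blast
  qed
qed

theorem corollary4p6:
  fixes n :: nat and c :: "nat \<Rightarrow> complex"
  assumes "n \<ge> 2"
  shows "((\<lambda>a::complex.
            dF (proots (shift_poly (c (n - 1) / of_nat n) (monom 1 n + [:a ^ n:])))
               (proots (monom 1 n + (\<Sum>k = 1..n - 1. monom (c k) k) + [:a ^ n:])))
          \<longlongrightarrow> 0) at_infinity"
proof (rule tendstoI)
  fix \<epsilon> :: real assume "\<epsilon> > 0"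
  then have "\<epsilon> / 2 > 0" by simp
  from eventually_dF_le[OF assms this, of c]
  show "\<forall>\<^sub>F a in at_infinity.
          dist (dF (proots (shift_poly (c (n - 1) / of_nat n) (monom 1 n + [:a ^ n:])))
                   (proots (monom 1 n + (\<Sum>k = 1..n - 1. monom (c k) k) + [:a ^ n:]))) 0 < \<epsilon>"
    (is "\<forall>\<^sub>F a in _. dist (?d a) 0 < _")
  proof (rule eventually_mono)
    fix a assume le: "?d a \<le> \<epsilon> / 2"
    have "0 < size (proots (shift_poly (c (n - 1) / of_nat n) (monom 1 n + [:a ^ n:])))"
      using assms shifted_binomial(2) size_proots_complex by simp
    then have "0 \<le> ?d a" by (rule dF_nonneg)
    then show "dist (?d a) 0 < \<epsilon>" using le \<open>\<epsilon> > 0\<close> by simp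
  qed
qed

end
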